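(* Let $\mathbb N$ be a strongly connected symmetric directed graph on $m$ vertices without self-arcs, with arc matrices $C_{ij}$ (each with $n$ columns) such that $\bar{\mathbb N}$ is well-configured. Let $\alpha(t)>0$, $t=0,1,2,\dots$, satisfy $\sum_t\alpha(t)=\infty$ and $\sum_t\alpha(t)^2<\infty$. For arbitrary $x_i(0)\in\mathbb R^n$, define for each agent $i$ $$x_i(t+1)=x_i(t)-\alpha(t)\sum_{j\in\mathcal N_i}\big(C_{ij}'C_{ij}+C_{ji}'C_{ji}\big)\big(x_i(t)-x_j(t)\big).$$ Then there exists $x^*\in\mathbb R^n$ such that $x_i(t)\to x^*$ as $t\to\infty$ for every $i$.
   Context: A directed graph is symmetric if whenever $(i,j)$ is an arc so is $(j,i)$. $\mathcal N_i$ is the set of neighbors $j$ of agent $i$ (those $j\ne i$ with $(j,i)$ an arc). Each arc $(j,i)$ carries a real matrix $C_{ji}$ with $n$ columns; $'$ denotes transpose. $\bar{\mathbb N}$ is well-configured if for all $x_1,\dots,x_m\in\mathbb R^n$, $C_{ji}x_i=C_{ji}x_j$ for every arc $(j,i)$ implies $x_1=\cdots=x_m$. *)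

theory Defs
  imports "HOL-Analysis.Analysis"
begin

text \<open>Agents are the elements of a finite type 'a; arcs form a relation A,
  (j,i) \<in> A meaning an arc from j to i. Arc matrices C j i :: real^'n^'k
  (n columns; the row type 'k is arbitrary).\<close>

definition symmetric_digraph :: "('a \<times> 'a) set \<Rightarrow> bool" where
  "symmetric_digraph A \<longleftrightarrow> (\<forall>i j. (i,j) \<in> A \<longrightarrow> (j,i) \<in> A)"

definition strongly_connected :: "('a \<times> 'a) set \<Rightarrow> bool" where
  "strongly_connected A \<longleftrightarrow> (\<forall>i j. (i,j) \<in> A\<^sup>*)"

definition no_self_arcs :: "('a \<times> 'a) set \<Rightarrow> bool" where
  "no_self_arcs A \<longleftrightarrow> (\<forall>i. (i,i) \<notin> A)"

definition neighbors :: "('a \<times> 'a) set \<Rightarrow> 'a \<Rightarrow> 'a set" where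
  "neighbors A i = {j. j \<noteq> i \<and> (j,i) \<in> A}"

text \<open>Well-configuredness of the graph with self-arcs added (self-arcs impose
  no constraint, so only the arcs of A matter).\<close>
definition well_configured ::
  "('a \<times> 'a) set \<Rightarrow> ('a \<Rightarrow> 'a \<Rightarrow> real^'n^'k) \<Rightarrow> bool" where
  "well_configured A C \<longleftrightarrow>
     (\<forall>x :: 'a \<Rightarrow> real^'n.
        (\<forall>j i. (j,i) \<in> A \<longrightarrow> C j i *v x i = C j i *v x j) \<longrightarrow> (\<forall>i j. x i = x j))"

end

theory Submission
  imports Defs
begin

text \<open>Stacking the agents' states into one vector X(t), the iteration reads
  X(t+1) = X(t) - \<alpha>(t) L X(t) for a symmetric positive semidefinite block Laplacian L
  whose quadratic form is a sum of squared arc disagreements. Symmetry of the graph makes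
  the sum of the states invariant, and well-configuredness makes L positive definite on the
  zero-sum vectors, hence coercive there by compactness of the unit sphere. The deviation E
  from the average then satisfies |E(t+1)|^2 \<le> (1 - \<mu> \<alpha>(t)) |E(t)|^2 once \<alpha>(t) is small,
  and the divergence of the sum of the step sizes drives it to 0.\<close>

lemma contracting_sequence_tendsto_zero:
  fixes V \<beta> :: "nat \<Rightarrow> real"
  assumes V_nonneg: "\<And>t. 0 \<le> V t" and \<beta>_nonneg: "\<And>t. 0 \<le> \<beta> t"
    and not_summable: "\<not> summable \<beta>"
    and contract: "\<And>t. V (Suc t) \<le> (1 - \<beta> t) * V t"
  shows "V \<longlonglongrightarrow> 0"
proof -
  have bound: "V t \<le> V 0 * exp (- (\<Sum>s<t. \<beta> s))" for t
  proof (induction t)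
    case (Suc t)
    have "1 - \<beta> t \<le> exp (- \<beta> t)"
      using exp_ge_add_one_self[of "- \<beta> t"] by simp
    then have "V (Suc t) \<le> exp (- \<beta> t) * V t"
      using contract[of t] V_nonneg[of t] by (meson mult_right_mono order_trans)
    also have "\<dots> \<le> exp (- \<beta> t) * (V 0 * exp (- (\<Sum>s<t. \<beta> s)))"
      using Suc by simp
    also have "\<dots> = V 0 * exp (- (\<Sum>s<Suc t. \<beta> s))"
      by (simp add: algebra_simps flip: exp_add)
    finally show ?case .
  qed simp
  have "filterlim (\<lambda>t. \<Sum>s<t. \<beta> s) at_top sequentially"
    unfolding filterlim_at_top eventually_sequentially
  proof
    fix Z
    have "\<not> (\<forall>k. (\<Sum>s<k. \<beta> s) \<le> Z)"
      using summableI_nonneg_bounded[of \<beta> Z] \<beta>_nonneg not_summable by blast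
    then obtain k where "Z \<le> (\<Sum>s<k. \<beta> s)"
      by (meson linear)
    moreover have "(\<Sum>s<k. \<beta> s) \<le> (\<Sum>s<t. \<beta> s)" if "k \<le> t" for t
      using that \<beta>_nonneg by (intro sum_mono2) auto
    ultimately show "\<exists>N. \<forall>t\<ge>N. Z \<le> (\<Sum>s<t. \<beta> s)"
      by (meson order_trans)
  qed
  then have "(\<lambda>t. exp (- (\<Sum>s<t. \<beta> s))) \<longlonglongrightarrow> 0"
    by (intro filterlim_compose[OF exp_at_bot]) (simp add: filterlim_uminus_at_bot)
  then have lim: "(\<lambda>t. V 0 * exp (- (\<Sum>s<t. \<beta> s))) \<longlonglongrightarrow> 0"
    by (rule tendsto_mult_right_zero)
  have "\<forall>t. norm (V t) \<le> V 0 * exp (- (\<Sum>s<t. \<beta> s))"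
    using V_nonneg bound by simp
  then show ?thesis
    using lim by (rule Lim_null_comparison[OF always_eventually])
qed

lemma linear_descent_tendsto_zero:
  fixes L :: "'v::real_inner \<Rightarrow> 'v" and E :: "nat \<Rightarrow> 'v"
  assumes "bounded_linear L" and "0 < \<mu>"
    and coercive: "\<And>t. \<mu> * (norm (E t))\<^sup>2 \<le> inner (E t) (L (E t))"
    and \<alpha>_pos: "\<And>t. 0 < \<alpha> t" and "\<alpha> \<longlonglongrightarrow> 0" and "\<not> summable \<alpha>"
    and step: "\<And>t. E (Suc t) = E t - \<alpha> t *\<^sub>R L (E t)"
  shows "E \<longlonglongrightarrow> 0"
proof -
  obtain K where "0 < K" and K: "\<And>e. norm (L e) \<le> norm e * K"
    using bounded_linear.pos_bounded[OF assms(1)] by blast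
  define V where "V t = (norm (E t))\<^sup>2" for t
  have energy: "V (Suc t) \<le> (1 - \<alpha> t * (2 * \<mu> - \<alpha> t * K\<^sup>2)) * V t" for t
  proof -
    have expand: "V (Suc t) = V t - 2 * \<alpha> t * inner (E t) (L (E t)) + (\<alpha> t)\<^sup>2 * (norm (L (E t)))\<^sup>2"
      unfolding V_def step power2_norm_eq_inner
      by (simp add: inner_diff_left inner_diff_right inner_commute algebra_simps power2_eq_square)
    have "(norm (L (E t)))\<^sup>2 \<le> (norm (E t) * K)\<^sup>2"
      using K[of "E t"] by (rule power_mono) simp
    then have "(norm (L (E t)))\<^sup>2 \<le> K\<^sup>2 * V t"
      by (simp add: V_def power_mult_distrib mult.commute)
    then have "(\<alpha> t)\<^sup>2 * (norm (L (E t)))\<^sup>2 \<le> (\<alpha> t)\<^sup>2 * (K\<^sup>2 * V t)"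
      by (rule mult_left_mono) simp
    moreover have "2 * \<alpha> t * (\<mu> * V t) \<le> 2 * \<alpha> t * inner (E t) (L (E t))"
      using coercive[of t] \<alpha>_pos[of t] by (simp add: V_def)
    ultimately show ?thesis
      using expand by (simp add: algebra_simps power2_eq_square)
  qed
  obtain T where small: "\<And>t. T \<le> t \<Longrightarrow> \<alpha> t * K\<^sup>2 \<le> \<mu>"
  proof -
    have "eventually (\<lambda>t. \<alpha> t < \<mu> / K\<^sup>2) sequentially"
      using order_tendstoD(2)[OF assms(5)] \<open>0 < \<mu>\<close> \<open>0 < K\<close> by simp
    then obtain T where "\<And>t. T \<le> t \<Longrightarrow> \<alpha> t < \<mu> / K\<^sup>2"
      by (auto simp: eventually_sequentially)
    with \<open>0 < K\<close> show ?thesis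
      by (intro that[of T]) (simp add: pos_less_divide_eq less_imp_le)
  qed
  have "(\<lambda>t. V (t + T)) \<longlonglongrightarrow> 0"
  proof (rule contracting_sequence_tendsto_zero[where \<beta> = "\<lambda>t. \<mu> * \<alpha> (t + T)"])
    show "\<not> summable (\<lambda>t. \<mu> * \<alpha> (t + T))"
      using \<open>\<not> summable \<alpha>\<close> \<open>0 < \<mu>\<close> summable_iff_shift[of \<alpha> T] by (simp add: summable_cmult_iff)
    fix t
    have "1 - \<alpha> (t + T) * (2 * \<mu> - \<alpha> (t + T) * K\<^sup>2) \<le> 1 - \<mu> * \<alpha> (t + T)"
      using small[of "t + T"] \<alpha>_pos[of "t + T"] by (simp add: algebra_simps mult_left_mono)
    then have "(1 - \<alpha> (t + T) * (2 * \<mu> - \<alpha> (t + T) * K\<^sup>2)) * V (t + T)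
        \<le> (1 - \<mu> * \<alpha> (t + T)) * V (t + T)"
      by (rule mult_right_mono) (simp add: V_def)
    with energy[of "t + T"] have "V (Suc (t + T)) \<le> (1 - \<mu> * \<alpha> (t + T)) * V (t + T)"
      by (rule order_trans)
    then show "V (Suc t + T) \<le> (1 - \<mu> * \<alpha> (t + T)) * V (t + T)"
      by simp
  qed (use \<alpha>_pos \<open>0 < \<mu>\<close> in \<open>auto simp: V_def intro!: less_imp_le\<close>)
  then have "V \<longlonglongrightarrow> 0"
    by (rule LIMSEQ_offset)
  then have "(\<lambda>t. sqrt (V t)) \<longlonglongrightarrow> sqrt 0"
    by (rule tendsto_real_sqrt)
  then show ?thesis
    by (simp add: V_def tendsto_norm_zero_iff)
qed

lemma linear_coercive_on_subspace:
  fixes L :: "'v::euclidean_space \<Rightarrow> 'v"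
  assumes "linear L" and "subspace S"
    and pos: "\<And>e. e \<in> S \<Longrightarrow> e \<noteq> 0 \<Longrightarrow> 0 < inner e (L e)"
  shows "\<exists>\<mu>>0. \<forall>e\<in>S. \<mu> * (norm e)\<^sup>2 \<le> inner e (L e)"
proof -
  let ?q = "\<lambda>e. inner e (L e)"
  have "\<exists>\<mu>>0. \<forall>u\<in>sphere 0 1 \<inter> S. \<mu> \<le> ?q u"
  proof (cases "sphere 0 1 \<inter> S = {}")
    case False
    have "compact (sphere 0 1 \<inter> S)"
      using assms(2) by (simp add: closed_subspace compact_Int_closed)
    moreover have "continuous_on (sphere 0 1 \<inter> S) ?q"
      using linear_continuous_on[OF linear_conv_bounded_linear[THEN iffD1, OF assms(1)]]
      by (intro continuous_intros) (auto intro: continuous_on_subset)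
    ultimately obtain u where "u \<in> sphere 0 1 \<inter> S" "\<forall>v\<in>sphere 0 1 \<inter> S. ?q u \<le> ?q v"
      using continuous_attains_inf[OF _ False] by blast
    moreover have "0 < ?q u"
      using \<open>u \<in> sphere 0 1 \<inter> S\<close> pos by fastforce
    ultimately show ?thesis by blast
  qed (auto intro: exI[of _ 1])
  then obtain \<mu> where "0 < \<mu>" and \<mu>: "\<And>u. u \<in> sphere 0 1 \<inter> S \<Longrightarrow> \<mu> \<le> ?q u"
    by blast
  have "\<mu> * (norm e)\<^sup>2 \<le> ?q e" if "e \<in> S" for e
  proof (cases "e = 0")
    case True
    then show ?thesis by (simp add: linear_0[OF assms(1)])
  next
    case False
    have "inverse (norm e) *\<^sub>R e \<in> sphere 0 1 \<inter> S"
      using False that assms(2) by (simp add: subspace_scale)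
    then have "\<mu> \<le> ?q (inverse (norm e) *\<^sub>R e)"
      by (rule \<mu>)
    also have "\<dots> = ?q e / (norm e)\<^sup>2"
      by (simp add: linear_scale[OF assms(1)] power2_eq_square divide_inverse)
    finally show ?thesis
      using False by (simp add: pos_le_divide_eq)
  qed
  with \<open>0 < \<mu>\<close> show ?thesis by blast
qed

definition edge_weight :: "('a \<Rightarrow> 'a \<Rightarrow> real^'n^'k) \<Rightarrow> 'a \<Rightarrow> 'a \<Rightarrow> real^'n^'n" where
  "edge_weight C i j = transpose (C i j) ** C i j + transpose (C j i) ** C j i"

definition laplacian ::
  "('a::finite \<times> 'a) set \<Rightarrow> ('a \<Rightarrow> 'a \<Rightarrow> real^'n^'k) \<Rightarrow> (real^'n)^'a \<Rightarrow> (real^'n)^'a" where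
  "laplacian A C e = (\<chi> i. \<Sum>j\<in>neighbors A i. edge_weight C i j *v (e$i - e$j))"

definition disagreement ::
  "('a::finite \<times> 'a) set \<Rightarrow> ('a \<Rightarrow> 'a \<Rightarrow> real^'n^'k) \<Rightarrow> (real^'n)^'a \<Rightarrow> real" where
  "disagreement A C e =
     (\<Sum>i\<in>UNIV. \<Sum>j\<in>neighbors A i. (norm (C i j *v (e$i - e$j)))\<^sup>2 + (norm (C j i *v (e$i - e$j)))\<^sup>2)"

lemma edge_weight_commute: "edge_weight C j i = edge_weight C i j"
  by (simp add: edge_weight_def add.commute)

lemma inner_edge_weight:
  "inner (edge_weight C i j *v v) w = inner (C i j *v v) (C i j *v w) + inner (C j i *v v) (C j i *v w)"
  by (simp add: edge_weight_def matrix_vector_mult_add_rdistrib inner_add_left dot_lmul_matrix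
      flip: matrix_vector_mul_assoc)

lemma neighbors_sym: "symmetric_digraph A \<Longrightarrow> j \<in> neighbors A i \<longleftrightarrow> i \<in> neighbors A j"
  unfolding symmetric_digraph_def neighbors_def by auto

lemma sum_neighbors_swap:
  fixes g :: "'a::finite \<Rightarrow> 'a \<Rightarrow> 'b::comm_monoid_add"
  assumes "symmetric_digraph A"
  shows "(\<Sum>i\<in>UNIV. \<Sum>j\<in>neighbors A i. g i j) = (\<Sum>i\<in>UNIV. \<Sum>j\<in>neighbors A i. g j i)"
proof -
  have restrict: "(\<Sum>j\<in>neighbors A i. h j) = (\<Sum>j\<in>UNIV. if j \<in> neighbors A i then h j else 0)"
    for h :: "'a \<Rightarrow> 'b" and i
    by (simp add: sum.If_cases)
  have "(\<Sum>i\<in>UNIV. \<Sum>j\<in>neighbors A i. g i j) = (\<Sum>i\<in>UNIV. \<Sum>j\<in>UNIV. if j \<in> neighbors A i then g i j else 0)"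
    by (simp only: restrict)
  also have "\<dots> = (\<Sum>j\<in>UNIV. \<Sum>i\<in>UNIV. if i \<in> neighbors A j then g i j else 0)"
    by (subst sum.swap) (simp add: neighbors_sym[OF assms])
  also have "\<dots> = (\<Sum>i\<in>UNIV. \<Sum>j\<in>neighbors A i. g j i)"
    by (simp only: restrict)
  finally show ?thesis .
qed

lemma linear_laplacian: "linear (laplacian A C)"
proof (rule linearI)
  show "laplacian A C (e + e') = laplacian A C e + laplacian A C e'" for e e'
    by (simp add: laplacian_def vec_eq_iff algebra_simps flip: sum.distrib)
  show "laplacian A C (c *\<^sub>R e) = c *\<^sub>R laplacian A C e" for c e
    by (simp add: laplacian_def vec_eq_iff scaleR_sum_right algebra_simps)
qed

lemma laplacian_diff_const: "laplacian A C (e - (\<chi> i. c)) = laplacian A C e"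
  by (simp add: laplacian_def)

lemma sum_laplacian_eq_0:
  assumes "symmetric_digraph A"
  shows "(\<Sum>i\<in>UNIV. laplacian A C e $ i) = 0"
proof -
  let ?S = "\<Sum>i\<in>UNIV. \<Sum>j\<in>neighbors A i. edge_weight C i j *v (e$i - e$j)"
  have "?S = (\<Sum>i\<in>UNIV. \<Sum>j\<in>neighbors A i. edge_weight C j i *v (e$j - e$i))"
    by (rule sum_neighbors_swap[OF assms])
  also have "\<dots> = - ?S"
    by (simp add: edge_weight_commute algebra_simps flip: sum_negf)
  finally have "(2::real) *\<^sub>R ?S = 0"
    by (simp add: scaleR_2 eq_neg_iff_add_eq_0)
  then show ?thesis
    by (simp add: laplacian_def)
qed

lemma inner_laplacian:
  assumes "symmetric_digraph A"
  shows "2 * inner e (laplacian A C e) = disagreement A C e"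
proof -
  let ?S = "\<Sum>i\<in>UNIV. \<Sum>j\<in>neighbors A i. inner (e$i) (edge_weight C i j *v (e$i - e$j))"
  have "?S = (\<Sum>i\<in>UNIV. \<Sum>j\<in>neighbors A i. inner (e$j) (edge_weight C j i *v (e$j - e$i)))"
    by (rule sum_neighbors_swap[OF assms])
  also have "\<dots> = (\<Sum>i\<in>UNIV. \<Sum>j\<in>neighbors A i. - inner (e$j) (edge_weight C i j *v (e$i - e$j)))"
    by (simp add: edge_weight_commute algebra_simps)
  finally have "2 * ?S = ?S + (\<Sum>i\<in>UNIV. \<Sum>j\<in>neighbors A i. - inner (e$j) (edge_weight C i j *v (e$i - e$j)))"
    by simp
  also have "\<dots> = (\<Sum>i\<in>UNIV. \<Sum>j\<in>neighbors A i. inner (e$i - e$j) (edge_weight C i j *v (e$i - e$j)))"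
    by (simp add: inner_diff_left flip: sum.distrib)
  also have "\<dots> = disagreement A C e"
    by (simp add: disagreement_def inner_commute[of "e$i - e$j" for i j] inner_edge_weight
        power2_norm_eq_inner)
  finally show ?thesis
    unfolding inner_vec_def[of e] by (simp add: laplacian_def inner_sum_right)
qed

lemma disagreement_nonneg: "0 \<le> disagreement A C e"
  unfolding disagreement_def by (intro sum_nonneg add_nonneg_nonneg) simp_all

lemma disagreement_eq_0_imp_consensus:
  assumes "well_configured A C" and "disagreement A C e = 0"
  shows "e$i = e$j"
proof -
  have "C j i *v e$i = C j i *v e$j" if "(j, i) \<in> A" for i j
  proof (cases "j = i")
    case False
    with that have "j \<in> neighbors A i"
      by (simp add: neighbors_def)
    then have "(norm (C i j *v (e$i - e$j)))\<^sup>2 + (norm (C j i *v (e$i - e$j)))\<^sup>2 = 0"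
      using assms(2) unfolding disagreement_def
      by (simp add: sum_nonneg_eq_0_iff sum_nonneg add_nonneg_eq_0_iff)
    then show ?thesis
      by (simp add: add_nonneg_eq_0_iff matrix_vector_mult_diff_distrib)
  qed simp
  then show ?thesis
    using assms(1) unfolding well_configured_def by blast
qed

lemma inner_laplacian_pos:
  assumes "symmetric_digraph A" and "well_configured A C"
    and "(\<Sum>i\<in>UNIV. e$i) = 0" and "e \<noteq> 0"
  shows "0 < inner e (laplacian A C e)"
proof -
  have "inner e (laplacian A C e) \<noteq> 0"
  proof
    assume "inner e (laplacian A C e) = 0"
    then have "disagreement A C e = 0"
      using inner_laplacian[OF assms(1), of e C] by simp
    then have consensus: "e$i = e$j" for i j
      using disagreement_eq_0_imp_consensus[OF assms(2)] by blast
    fix k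
    have "(\<Sum>i\<in>UNIV. e$i) = (\<Sum>i::'a\<in>UNIV. e$k)"
      by (rule sum.cong[OF refl]) (rule consensus)
    also have "\<dots> = real CARD('a) *\<^sub>R e$k"
      by (rule sum_constant_scaleR)
    finally have "e$k = 0"
      using assms(3) by simp
    then have "e = 0"
      by (metis consensus vec_eq_iff zero_index)
    with assms(4) show False ..
  qed
  then show ?thesis
    using inner_laplacian[OF assms(1), of e C] disagreement_nonneg[of A C e] by simp
qed

lemma laplacian_coercive:
  fixes C :: "'a::finite \<Rightarrow> 'a \<Rightarrow> real^'n^'k"
  assumes "symmetric_digraph A" and "well_configured A C"
  shows "\<exists>\<mu>>0. \<forall>e. (\<Sum>i\<in>UNIV. e$i) = 0 \<longrightarrow> \<mu> * (norm e)\<^sup>2 \<le> inner e (laplacian A C e)"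
proof -
  have "subspace {e :: (real^'n)^'a. (\<Sum>i\<in>UNIV. e$i) = 0}"
    by (auto simp: subspace_def sum.distrib simp flip: scaleR_sum_right)
  from linear_coercive_on_subspace[OF linear_laplacian this] show ?thesis
    using inner_laplacian_pos[OF assms] by auto
qed

lemma laplacian_iteration_consensus:
  fixes X :: "nat \<Rightarrow> (real^'n)^'a::finite" and C :: "'a \<Rightarrow> 'a \<Rightarrow> real^'n^'k"
  assumes "symmetric_digraph A" and "well_configured A C"
    and "\<And>t. 0 < \<alpha> t" and "\<alpha> \<longlonglongrightarrow> 0" and "\<not> summable \<alpha>"
    and step: "\<And>t. X (Suc t) = X t - \<alpha> t *\<^sub>R laplacian A C (X t)"
  shows "X \<longlonglongrightarrow> (\<chi> i. (\<Sum>j\<in>UNIV. X 0 $ j) /\<^sub>R real CARD('a))"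
proof -
  define c where "c = (\<Sum>j\<in>UNIV. X 0 $ j) /\<^sub>R real CARD('a)"
  define E where "E t = X t - (\<chi> i. c)" for t
  have E_step: "E (Suc t) = E t - \<alpha> t *\<^sub>R laplacian A C (E t)" for t
    by (simp add: E_def step laplacian_diff_const)
  have E_sum: "(\<Sum>i\<in>UNIV. E t $ i) = 0" for t
  proof (induction t)
    case 0
    show ?case by (simp add: E_def c_def sum_subtractf sum_constant_scaleR del: sum_constant)
  next
    case (Suc t)
    then show ?case
      using sum_laplacian_eq_0[OF assms(1), of C "E t"]
      by (simp add: E_step sum_subtractf flip: scaleR_sum_right)
  qed
  obtain \<mu> where "0 < \<mu>"
    and \<mu>: "\<And>e. (\<Sum>i\<in>UNIV. e$i) = 0 \<Longrightarrow> \<mu> * (norm e)\<^sup>2 \<le> inner e (laplacian A C e)"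
    using laplacian_coercive[OF assms(1,2)] by blast
  have "bounded_linear (laplacian A C)"
    using linear_laplacian linear_conv_bounded_linear by blast
  then have "E \<longlonglongrightarrow> 0"
    by (rule linear_descent_tendsto_zero[OF _ \<open>0 < \<mu>\<close> \<mu>[OF E_sum] assms(3-5) E_step])
  then show ?thesis
    using tendsto_add_const_iff[of "\<chi> i. c" E 0] by (simp add: E_def c_def)
qed

theorem theorem4:
  fixes A :: "('a::finite \<times> 'a) set"
    and C :: "'a \<Rightarrow> 'a \<Rightarrow> real^'n^'k"
    and \<alpha> :: "nat \<Rightarrow> real"
    and x :: "nat \<Rightarrow> 'a \<Rightarrow> real^'n"
  assumes "symmetric_digraph A" and "strongly_connected A" and "no_self_arcs A"
    and "well_configured A C"
    and "\<forall>t. \<alpha> t > 0"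
    and "\<not> summable \<alpha>"
    and "summable (\<lambda>t. (\<alpha> t)\<^sup>2)"
    and "\<forall>t i. x (Suc t) i = x t i - \<alpha> t *\<^sub>R
           (\<Sum>j\<in>neighbors A i.
              (transpose (C i j) ** C i j + transpose (C j i) ** C j i) *v (x t i - x t j))"
  shows "\<exists>xs :: real^'n. \<forall>i. (\<lambda>t. x t i) \<longlonglongrightarrow> xs"
proof -
  define X where "X t = (\<chi> i. x t i)" for t
  have "X (Suc t) = X t - \<alpha> t *\<^sub>R laplacian A C (X t)" for t
    using assms(8) by (simp add: X_def laplacian_def edge_weight_def vec_eq_iff)
  moreover have "\<alpha> \<longlonglongrightarrow> 0"
  proof -
    have "(\<lambda>t. sqrt ((\<alpha> t)\<^sup>2)) \<longlonglongrightarrow> sqrt 0"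
      by (intro tendsto_real_sqrt summable_LIMSEQ_zero assms(7))
    then show ?thesis
      using assms(5) by (simp add: less_imp_le)
  qed
  ultimately have "X \<longlonglongrightarrow> (\<chi> i. (\<Sum>j\<in>UNIV. X 0 $ j) /\<^sub>R real CARD('a))"
    using laplacian_iteration_consensus[OF assms(1,4)] assms(5,6) by blast
  then have "(\<lambda>t. X t $ i) \<longlonglongrightarrow> (\<Sum>j\<in>UNIV. X 0 $ j) /\<^sub>R real CARD('a)" for i
    by (auto dest: tendsto_vec_nth)
  then show ?thesis
    by (auto simp: X_def)
qed

end
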